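(* Let $s\ge2$ and $l_1,\dots,l_s$ be positive integers with $\sum_{i=1}^s l_i\ge 3$. Then the graph $P_{l_1}\uplus P_{l_2}\uplus\cdots\uplus P_{l_s}\uplus K_1$ has a dispersed $4$-placement.
   Context: $P_m$ is the path on $m$ vertices, $K_1$ a single vertex, and $\uplus$ denotes vertex-disjoint union. For a graph $H$ on $m$ vertices, a $k$-placement of $H$ is a $k$-tuple $(\phi_1,\dots,\phi_k)$ of bijections $\phi_i:V(H)\to V(K_m)$ with pairwise disjoint edge sets $\phi_i(E(H))=\{\phi_i(x)\phi_i(y):xy\in E(H)\}$; it is dispersed if $\phi_i(v)\ne\phi_j(v)$ for every vertex $v$ and all $i\ne j$. *)

theory Defs
  imports Main
begin

text \<open>The complete graph K_m on m = card V vertices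
  has vertex set {0..<m}.\<close>

definition edge_image :: "('a \<Rightarrow> nat) \<Rightarrow> 'a set set \<Rightarrow> nat set set" where
  "edge_image f E = (\<lambda>e. f ` e) ` E"

definition is_placement :: "'a set \<Rightarrow> 'a set set \<Rightarrow> nat \<Rightarrow> (nat \<Rightarrow> 'a \<Rightarrow> nat) \<Rightarrow> bool" where
  "is_placement V E k \<phi> \<longleftrightarrow>
     (\<forall>i<k. bij_betw (\<phi> i) V {0..<card V}) \<and>
     (\<forall>i<k. \<forall>j<k. i \<noteq> j \<longrightarrow> edge_image (\<phi> i) E \<inter> edge_image (\<phi> j) E = {})"

definition is_dispersed_placement :: "'a set \<Rightarrow> 'a set set \<Rightarrow> nat \<Rightarrow> (nat \<Rightarrow> 'a \<Rightarrow> nat) \<Rightarrow> bool" where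
  "is_dispersed_placement V E k \<phi> \<longleftrightarrow>
     is_placement V E k \<phi> \<and>
     (\<forall>v\<in>V. \<forall>i<k. \<forall>j<k. i \<noteq> j \<longrightarrow> \<phi> i v \<noteq> \<phi> j v)"

text \<open>The graph P_{l_1} + ... + P_{l_s} + K_1: the path P_{l_i} has vertices (i,j), j < l i,
  with edges {(i,j),(i,j+1)}; the extra isolated vertex K_1 is (0,0).\<close>

definition paths_K1_verts :: "nat \<Rightarrow> (nat \<Rightarrow> nat) \<Rightarrow> (nat \<times> nat) set" where
  "paths_K1_verts s l = {(i, j). 1 \<le> i \<and> i \<le> s \<and> j < l i} \<union> {(0, 0)}"

definition paths_K1_edges :: "nat \<Rightarrow> (nat \<Rightarrow> nat) \<Rightarrow> (nat \<times> nat) set set" where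
  "paths_K1_edges s l = {{(i, j), (i, Suc j)} | i j. 1 \<le> i \<and> i \<le> s \<and> Suc j < l i}"

end

theory Submission
  imports Defs "HOL-Number_Theory.Cong"
begin

text \<open>Numbering the vertices consecutively, \<open>K\<^sub>1\<close> first, turns every edge into a pair
  \<open>{k, k + 1}\<close> with \<open>1 \<le> k\<close> and \<open>k \<noteq> l\<^sub>1\<close>, so it suffices to find a dispersed 4-placement of
  \<open>P\<^bsub>l\<^sub>1\<^esub> \<uplus> P\<^bsub>m-1-l\<^sub>1\<^esub> \<uplus> K\<^sub>1\<close> on \<open>{0..<m}\<close>, \<open>m = 1 + \<Sum>l\<^sub>i\<close>, and pull it back. For \<open>m \<ge> 8\<close> the four rotations
  \<open>x \<mapsto> x + i\<close> (mod \<open>m\<close>) of the zigzag ordering \<open>0, 1, m - 1, 2, m - 2, \<dots>\<close> even place the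
  whole path \<open>P\<^sub>m\<close>: an edge placed by rotation \<open>i\<close> has endpoint sum \<open>2i\<close> or \<open>2i + 1\<close> modulo \<open>m\<close>.
  The finitely many cases \<open>4 \<le> m \<le> 7\<close> are settled by explicit tables.\<close>

definition path_edges :: "nat \<Rightarrow> nat set set" where
  "path_edges m = (\<lambda>k. {k, Suc k}) ` {..<m - 1}"

text \<open>The graph \<open>P\<^sub>t \<uplus> P\<^bsub>m-1-t\<^esub> \<uplus> K\<^sub>1\<close> on \<open>{0..<m}\<close>: vertex 0 is isolated and the path on
  \<open>1, \<dots>, m - 1\<close> is cut between \<open>t\<close> and \<open>t + 1\<close>.\<close>

definition split_path_edges :: "nat \<Rightarrow> nat \<Rightarrow> nat set set" where
  "split_path_edges m t = (\<lambda>k. {k, Suc k}) ` ({1..<m - 1} - {t})"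

lemma split_path_edges_subset: "split_path_edges m t \<subseteq> path_edges m"
  by (auto simp: split_path_edges_def path_edges_def)

lemma edge_image_comp_subset:
  assumes "\<forall>e\<in>E. \<psi> ` e \<in> F"
  shows "edge_image (f \<circ> \<psi>) E \<subseteq> edge_image f F"
  using assms by (auto simp: edge_image_def image_comp[symmetric])

lemma dispersed_placement_pullback:
  assumes \<phi>: "is_dispersed_placement W F k \<phi>"
    and \<psi>: "bij_betw \<psi> V W"
    and edges: "\<forall>e\<in>E. \<psi> ` e \<in> F"
  shows "is_dispersed_placement V E k (\<lambda>i. \<phi> i \<circ> \<psi>)"
proof -
  have "card V = card W" using bij_betw_same_card[OF \<psi>] .
  then have bij: "\<forall>i<k. bij_betw (\<phi> i \<circ> \<psi>) V {0..<card V}"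
    using \<phi> \<psi> by (auto simp: is_dispersed_placement_def is_placement_def intro: bij_betw_trans)
  have "edge_image (\<phi> i \<circ> \<psi>) E \<inter> edge_image (\<phi> j \<circ> \<psi>) E = {}" if "i < k" "j < k" "i \<noteq> j" for i j
    using \<phi> that edge_image_comp_subset[OF edges]
    unfolding is_dispersed_placement_def is_placement_def by blast
  moreover have "(\<phi> i \<circ> \<psi>) v \<noteq> (\<phi> j \<circ> \<psi>) v" if "v \<in> V" "i < k" "j < k" "i \<noteq> j" for v i j
    using \<phi> that bij_betwE[OF \<psi>] unfolding is_dispersed_placement_def by auto
  ultimately show ?thesis
    using bij unfolding is_dispersed_placement_def is_placement_def by blast
qed

definition zigzag :: "nat \<Rightarrow> nat \<Rightarrow> nat" where
  "zigzag m k = (if k = 0 then 0 else if odd k then (k + 1) div 2 else m - k div 2)"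

lemma zigzag_less: "k < m \<Longrightarrow> zigzag m k < m"
  by (auto simp: zigzag_def)

lemma inj_on_zigzag: "inj_on (zigzag m) {0..<m}"
  by (rule inj_onI) (auto simp: zigzag_def split: if_splits elim!: oddE evenE)

lemma zigzag_adjacent_sum:
  "Suc k < m \<Longrightarrow> [zigzag m k + zigzag m (Suc k) = (if odd k then 0 else 1)] (mod m)"
  by (auto simp: zigzag_def cong_def mod_Suc elim!: oddE evenE)

lemma inj_on_add_mod: "inj_on (\<lambda>x. (x + i) mod m) {0..<m :: nat}"
proof (rule inj_onI)
  fix x y :: nat assume "x \<in> {0..<m}" "y \<in> {0..<m}" "(x + i) mod m = (y + i) mod m"
  then show "x = y"
    using cong_less_modulus_unique_nat[of x y m] cong_add_rcancel_nat[of x i y m] by (simp add: cong_def)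
qed

lemma bij_betw_rotated_zigzag: "bij_betw (\<lambda>x. (zigzag m x + i) mod m) {0..<m} {0..<m}"
proof -
  have "inj_on ((\<lambda>y. (y + i) mod m) \<circ> zigzag m) {0..<m}"
  proof (rule comp_inj_on)
    show "inj_on (\<lambda>y. (y + i) mod m) (zigzag m ` {0..<m})"
      by (rule inj_on_subset[OF inj_on_add_mod]) (auto simp: zigzag_less)
  qed (rule inj_on_zigzag)
  moreover have "(\<lambda>x. (zigzag m x + i) mod m) ` {0..<m} \<subseteq> {0..<m}"
    by auto
  ultimately show ?thesis
    by (simp add: bij_betw_def endo_inj_surj o_def)
qed

lemma rotated_zigzag_edge_sum:
  assumes "Suc a < m"
  shows "[(zigzag m a + i) mod m + (zigzag m (Suc a) + i) mod m = (if odd a then 0 else 1) + 2 * i] (mod m)"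
proof -
  have "[(zigzag m a + i) mod m + (zigzag m (Suc a) + i) mod m = (zigzag m a + zigzag m (Suc a)) + 2 * i] (mod m)"
    unfolding cong_def mod_add_eq by (simp add: mult_2 add_ac)
  also have "[zigzag m a + zigzag m (Suc a) + 2 * i = (if odd a then 0 else 1) + 2 * i] (mod m)"
    using zigzag_adjacent_sum[OF assms] by (rule cong_add) simp
  finally show ?thesis .
qed

lemma path_dispersed_placement:
  assumes "2 * k \<le> m"
  shows "is_dispersed_placement {0..<m} (path_edges m) k (\<lambda>i x. (zigzag m x + i) mod m)"
proof -
  let ?\<phi> = "\<lambda>i x. (zigzag m x + i) mod m"
  have "?\<phi> i x \<noteq> ?\<phi> j x" if "i < k" "j < k" "i \<noteq> j" for i j x
  proof
    assume "?\<phi> i x = ?\<phi> j x"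
    then have "(i + zigzag m x) mod m = (j + zigzag m x) mod m"
      by (simp add: add.commute)
    moreover have "i \<in> {0..<m}" "j \<in> {0..<m}"
      using that assms by auto
    ultimately show False
      using that(3) inj_on_add_mod[of "zigzag m x" m] by (auto dest: inj_onD)
  qed
  moreover have "edge_image (?\<phi> i) (path_edges m) \<inter> edge_image (?\<phi> j) (path_edges m) = {}"
    if ij: "i < k" "j < k" "i \<noteq> j" for i j
  proof (rule ccontr)
    assume "\<not> ?thesis"
    then obtain a b where ab: "Suc a < m" "Suc b < m"
      and eq: "{?\<phi> i a, ?\<phi> i (Suc a)} = {?\<phi> j b, ?\<phi> j (Suc b)}"
      by (auto simp: edge_image_def path_edges_def less_diff_conv)
    have "?\<phi> i a + ?\<phi> i (Suc a) = ?\<phi> j b + ?\<phi> j (Suc b)"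
      using eq by (auto simp: doubleton_eq_iff)
    then have "[(if odd a then 0 else 1) + 2 * i = (if odd b then 0 else 1) + 2 * j] (mod m)"
      using cong_trans[OF cong_sym[OF rotated_zigzag_edge_sum[OF ab(1), of i]]]
        rotated_zigzag_edge_sum[OF ab(2), of j] by simp
    moreover have "(if odd a then 0 else 1) + 2 * i < m" "(if odd b then 0 else 1) + 2 * j < m"
      using ij assms by auto
    ultimately have "(if odd a then 0 else 1) + 2 * i = (if odd b then 0 else 1) + 2 * j"
      by (rule cong_less_modulus_unique_nat)
    then have "((if odd a then 0 else 1) + 2 * i) div 2 = ((if odd b then 0 else 1) + 2 * j) div 2"
      by (rule arg_cong)
    then show False
      using ij(3) by simp
  qed
  ultimately show ?thesis
    using bij_betw_rotated_zigzag
    by (auto simp: is_dispersed_placement_def is_placement_def)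
qed

text \<open>Placements for \<open>4 \<le> m \<le> 7\<close> (where four rotations of the zigzag would need \<open>2 \<cdot> 4 \<le> m\<close>),
  keyed by \<open>(m, t)\<close>; row \<open>i\<close> lists the images of \<open>0, \<dots>, m - 1\<close> under the \<open>i\<close>-th bijection.\<close>

definition small_tables :: "((nat \<times> nat) \<times> nat list list) list" where
  "small_tables =
    [((4, 1), [[0, 1, 2, 3], [2, 0, 3, 1], [1, 3, 0, 2], [3, 2, 1, 0]]),
     ((4, 2), [[0, 1, 2, 3], [1, 2, 3, 0], [3, 0, 1, 2], [2, 3, 0, 1]]),
     ((5, 1), [[0, 1, 2, 3, 4], [1, 4, 3, 0, 2], [3, 0, 4, 2, 1], [2, 3, 1, 4, 0]]),
     ((5, 2), [[0, 1, 2, 3, 4], [2, 0, 3, 4, 1], [1, 4, 0, 2, 3], [4, 3, 1, 0, 2]]),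
     ((5, 3), [[0, 1, 2, 3, 4], [1, 3, 4, 2, 0], [4, 0, 3, 1, 2], [2, 4, 1, 0, 3]]),
     ((6, 1), [[0, 1, 2, 3, 4, 5], [2, 4, 5, 0, 1, 3], [3, 0, 4, 1, 5, 2], [5, 3, 1, 2, 0, 4]]),
     ((6, 2), [[0, 1, 2, 3, 4, 5], [2, 3, 5, 4, 0, 1], [3, 4, 1, 0, 5, 2], [5, 2, 4, 1, 3, 0]]),
     ((6, 3), [[0, 1, 2, 3, 4, 5], [1, 4, 3, 5, 2, 0], [5, 0, 4, 2, 1, 3], [4, 3, 0, 1, 5, 2]]),
     ((6, 4), [[0, 1, 2, 3, 4, 5], [2, 0, 4, 1, 5, 3], [4, 5, 3, 0, 1, 2], [3, 4, 5, 2, 0, 1]]),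
     ((7, 1), [[0, 1, 2, 3, 4, 5, 6], [2, 5, 3, 1, 0, 6, 4], [6, 3, 0, 4, 2, 1, 5], [1, 4, 5, 2, 6, 3, 0]]),
     ((7, 2), [[0, 1, 2, 3, 4, 5, 6], [2, 3, 5, 0, 6, 1, 4], [5, 6, 4, 1, 3, 2, 0], [1, 4, 0, 5, 2, 6, 3]]),
     ((7, 3), [[0, 1, 2, 3, 4, 5, 6], [1, 4, 6, 2, 3, 0, 5], [4, 2, 0, 6, 5, 3, 1], [2, 6, 1, 5, 0, 4, 3]]),
     ((7, 4), [[0, 1, 2, 3, 4, 5, 6], [2, 3, 1, 0, 6, 4, 5], [4, 6, 3, 5, 1, 2, 0], [1, 4, 6, 2, 5, 0, 3]]),
     ((7, 5), [[0, 1, 2, 3, 4, 5, 6], [2, 0, 5, 1, 3, 6, 4], [5, 4, 1, 6, 0, 3, 2], [1, 5, 6, 4, 2, 0, 3]])]"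

lemma small_tables_dispersed:
  "\<forall>((m, t), L) \<in> set small_tables.
     is_dispersed_placement {0..<m} (split_path_edges m t) 4 (\<lambda>i x. L ! i ! x)"
  by code_simp

lemma small_tables_cover: "\<forall>m\<in>{4..7}. \<forall>t\<in>{1..m - 2}. (m, t) \<in> fst ` set small_tables"
  by code_simp

lemma split_path_dispersed_placement:
  assumes "4 \<le> m" "1 \<le> t" "t + 2 \<le> m"
  shows "\<exists>\<phi>. is_dispersed_placement {0..<m} (split_path_edges m t) 4 \<phi>"
proof (cases "m \<le> 7")
  case True
  then obtain L where "((m, t), L) \<in> set small_tables"
    using small_tables_cover assms by fastforce
  then show ?thesis
    using small_tables_dispersed by fastforce
next
  case False
  then have "is_dispersed_placement {0..<m} (path_edges m) 4 (\<lambda>i x. (zigzag m x + i) mod m)"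
    by (intro path_dispersed_placement) simp
  moreover have "\<forall>e\<in>split_path_edges m t. id ` e \<in> path_edges m"
    using split_path_edges_subset by auto
  ultimately show ?thesis
    by (blast intro: dispersed_placement_pullback[OF _ bij_betw_id])
qed

definition prefix_sum :: "(nat \<Rightarrow> nat) \<Rightarrow> nat \<Rightarrow> nat" where
  "prefix_sum l i = (\<Sum>r=1..i. l r)"

lemma prefix_sum_0 [simp]: "prefix_sum l 0 = 0"
  by (simp add: prefix_sum_def)

lemma prefix_sum_Suc [simp]: "prefix_sum l (Suc i) = prefix_sum l i + l (Suc i)"
  by (simp add: prefix_sum_def)

lemma prefix_sum_mono: "i \<le> i' \<Longrightarrow> prefix_sum l i \<le> prefix_sum l i'"
  by (induction i' rule: dec_induct) auto

lemma prefix_sum_offset_unique: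
  assumes "j < l (Suc i)" "j' < l (Suc i')" "prefix_sum l i + j = prefix_sum l i' + j'"
  shows "i = i'"
proof -
  have "\<not> i < i'" if "j < l (Suc i)" "prefix_sum l i + j = prefix_sum l i' + j'" for i i' j j'
    using that prefix_sum_mono[of "Suc i" i' l] by auto
  then show ?thesis
    using assms by (metis linorder_neqE_nat)
qed

lemma prefix_sum_offset_exists:
  "x < prefix_sum l s \<Longrightarrow> \<exists>i<s. \<exists>j<l (Suc i). x = prefix_sum l i + j"
proof (induction s)
  case (Suc s)
  show ?case
  proof (cases "x < prefix_sum l s")
    case True
    then show ?thesis using Suc.IH less_SucI by blast
  next
    case False
    with Suc.prems have "x - prefix_sum l s < l (Suc s)" "x = prefix_sum l s + (x - prefix_sum l s)"
      by auto
    then show ?thesis by blast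
  qed
qed simp

definition paths_K1_index :: "(nat \<Rightarrow> nat) \<Rightarrow> nat \<times> nat \<Rightarrow> nat" where
  "paths_K1_index l = (\<lambda>(i, j). if i = 0 then 0 else Suc (prefix_sum l (i - 1) + j))"

lemma paths_K1_index_Suc [simp]: "paths_K1_index l (Suc i, j) = Suc (prefix_sum l i + j)"
  by (simp add: paths_K1_index_def)

lemma paths_K1_verts_cases:
  assumes "v \<in> paths_K1_verts s l"
  obtains "v = (0, 0)" | i j where "v = (Suc i, j)" "i < s" "j < l (Suc i)"
  using assms unfolding paths_K1_verts_def by (cases v) (auto simp: Suc_le_eq gr0_conv_Suc)

lemma bij_betw_paths_K1_index:
  "bij_betw (paths_K1_index l) (paths_K1_verts s l) {0..<Suc (prefix_sum l s)}"
proof -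
  let ?V = "paths_K1_verts s l"
  have "inj_on (paths_K1_index l) ?V"
  proof (rule inj_onI)
    fix v w assume v: "v \<in> ?V" and w: "w \<in> ?V" and "paths_K1_index l v = paths_K1_index l w"
    then show "v = w"
      by (cases rule: paths_K1_verts_cases[OF v]; cases rule: paths_K1_verts_cases[OF w])
        (auto simp: paths_K1_index_def dest: prefix_sum_offset_unique)
  qed
  moreover have "paths_K1_index l ` ?V \<subseteq> {0..<Suc (prefix_sum l s)}"
  proof
    fix x assume "x \<in> paths_K1_index l ` ?V"
    then obtain v where "v \<in> ?V" "x = paths_K1_index l v" by blast
    then show "x \<in> {0..<Suc (prefix_sum l s)}"
      by (cases rule: paths_K1_verts_cases)
        (auto simp: paths_K1_index_def dest!: Suc_leI dest: prefix_sum_mono[of _ s l])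
  qed
  moreover have "{0..<Suc (prefix_sum l s)} \<subseteq> paths_K1_index l ` ?V"
  proof
    fix x assume x: "x \<in> {0..<Suc (prefix_sum l s)}"
    show "x \<in> paths_K1_index l ` ?V"
    proof (cases x)
      case 0
      have "(0, 0) \<in> ?V" by (simp add: paths_K1_verts_def)
      then show ?thesis using 0 by (force simp: paths_K1_index_def)
    next
      case (Suc y)
      then obtain i j where "i < s" "j < l (Suc i)" "y = prefix_sum l i + j"
        using x prefix_sum_offset_exists[of y l s] by auto
      moreover have "(Suc i, j) \<in> ?V"
        using calculation by (simp add: paths_K1_verts_def)
      ultimately show ?thesis
        using Suc by (metis image_eqI paths_K1_index_Suc)
    qed
  qed
  ultimately show ?thesis
    by (auto simp: bij_betw_def)
qed

lemma paths_K1_index_edge: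
  assumes "e \<in> paths_K1_edges s l"
  shows "paths_K1_index l ` e \<in> split_path_edges (Suc (prefix_sum l s)) (l 1)"
proof -
  obtain i j where e: "e = {(Suc i, j), (Suc i, Suc j)}" "i < s" "Suc j < l (Suc i)"
    using assms unfolding paths_K1_edges_def by (auto simp: Suc_le_eq gr0_conv_Suc)
  let ?k = "Suc (prefix_sum l i + j)"
  have "?k < prefix_sum l s"
    using e prefix_sum_mono[of "Suc i" s l] by auto
  moreover have "?k \<noteq> l 1"
    using e prefix_sum_mono[of 1 i l] by (cases i) auto
  ultimately show ?thesis
    using e by (auto simp: split_path_edges_def)
qed

theorem lemma2p7:
  fixes s :: nat and l :: "nat \<Rightarrow> nat"
  assumes "s \<ge> 2"
    and "\<forall>i\<in>{1..s}. l i > 0"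
    and "(\<Sum>i=1..s. l i) \<ge> 3"
  shows "\<exists>\<phi>. is_dispersed_placement (paths_K1_verts s l) (paths_K1_edges s l) 4 \<phi>"
proof -
  define m where "m = Suc (prefix_sum l s)"
  have "l 1 > 0" "l 2 > 0"
    using assms(1,2) by auto
  moreover have "l 1 + l 2 \<le> prefix_sum l s"
    using prefix_sum_mono[OF assms(1), of l] by (simp add: numeral_2_eq_2)
  moreover have "4 \<le> m"
    using assms(3) by (simp add: m_def prefix_sum_def)
  ultimately obtain \<phi> where \<phi>: "is_dispersed_placement {0..<m} (split_path_edges m (l 1)) 4 \<phi>"
    using split_path_dispersed_placement[of m "l 1"] unfolding m_def by force
  have "bij_betw (paths_K1_index l) (paths_K1_verts s l) {0..<m}"
    unfolding m_def by (rule bij_betw_paths_K1_index)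
  moreover have "\<forall>e\<in>paths_K1_edges s l. paths_K1_index l ` e \<in> split_path_edges m (l 1)"
    unfolding m_def using paths_K1_index_edge by blast
  ultimately show ?thesis
    using dispersed_placement_pullback[OF \<phi>] by blast
qed

end
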